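(* Let $m,n\ge 1$ be integers and $\beta>0$. Let $U:\mathbb{R}^m\to\mathbb{R}$, let $\mathbf m:\mathbb{R}^m\to\mathbb{R}^{m\times m}$ take values in symmetric positive definite matrices, let $\mathbf H:\mathbb{R}^m\to\mathbb{R}^{m\times nm}$, and let $\boldsymbol\Gamma,\mathbf D:\mathbb{R}^m\to\mathbb{R}^{nm\times nm}$, all smooth. Define on $\widehat{\mathbf z}=(\mathbf q,\mathbf p,\boldsymbol\chi)\in\mathbb{R}^m\times\mathbb{R}^m\times\mathbb{R}^{nm}$ the extended free energy $$\widehat F(\mathbf q,\mathbf p,\boldsymbol\chi)=U(\mathbf q)+\tfrac12\mathbf p^\top\mathbf m(\mathbf q)^{-1}\mathbf p+\tfrac12\beta^{-1}\ln\det[\mathbf m(\mathbf q)]+\tfrac12\boldsymbol\chi^\top\boldsymbol\chi,$$ and consider the SDE $$\mathrm d\begin{pmatrix}\mathbf q\\ \mathbf p\\ \boldsymbol\chi\end{pmatrix}=\begin{pmatrix}0&\mathbf I&0\\ -\mathbf I&0&-\mathbf H(\mathbf q)\\ 0&\mathbf H(\mathbf q)^\top&\boldsymbol\Gamma(\mathbf q)\end{pmatrix}\nabla\widehat F(\mathbf q,\mathbf p,\boldsymbol\chi)\,\mathrm dt+\begin{pmatrix}0\\0\\ \mathbf D(\mathbf q)\,\mathrm d\mathbf W_t\end{pmatrix},$$ where $\mathbf W_t$ is a standard Brownian motion in $\mathbb{R}^{nm}$. If $\mathbf D(\mathbf q)\mathbf D(\mathbf q)^\top=-\beta^{-1}\big(\boldsymbol\Gamma(\mathbf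 q)+\boldsymbol\Gamma(\mathbf q)^\top\big)$ for all $\mathbf q$, then this SDE has the invariant distribution $$\rho_0(\mathbf q,\mathbf p,\boldsymbol\chi)\propto\frac{1}{(2\pi)^{m/2}\det[\mathbf m(\mathbf q)]^{1/2}}\exp\!\Big[-\beta\Big(U(\mathbf q)+\tfrac12\mathbf p^\top\mathbf m(\mathbf q)^{-1}\mathbf p+\tfrac12\boldsymbol\chi^\top\boldsymbol\chi\Big)\Big],$$ i.e. $\rho_0$ is a stationary solution of the associated Fokker–Planck equation.
   Context: This is a reduced (coarse-grained) model: $\mathbf q\in\mathbb{R}^m$ are coarse-grained coordinates, $\mathbf p$ their momenta, $\boldsymbol\chi=(\boldsymbol\chi_1;\dots;\boldsymbol\chi_n)$ with $\boldsymbol\chi_i\in\mathbb{R}^m$ auxiliary variables, $U$ a free energy, $\mathbf m(\mathbf q)$ a position-dependent mass matrix, and $\beta$ the inverse temperature. The density $\rho_0$ is assumed normalizable (e.g. $\int e^{-\beta U(\mathbf q)}\,\mathrm d\mathbf q<\infty$). Writing the SDE as $\mathrm d\widehat{\mathbf z}=\widehat{\mathbf J}(\mathbf q)\nabla\widehat F\,\mathrm dt+\widehat{\boldsymbol\Sigma}(\mathbf q)\,\mathrm d\mathbf W_t$, the Fokker–Planck equation is $\partial_t\rho=\nabla\cdot\big(-\widehat{\mathbf J}(\mathbf q)\nabla\widehat F\,\rho+\tfrac12\nabla\cdot(\widehat{\boldsymbol\Sigma}(\mathbf q)\widehat{\boldsymbol\Sigma}(\mathbf q)^\top\rho)\big)$.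 *)

theory Defs
  imports "HOL-Analysis.Analysis"
begin

definition partial :: "(real^'k \<Rightarrow> real) \<Rightarrow> 'k \<Rightarrow> real^'k \<Rightarrow> real" where
  "partial f i z = deriv (\<lambda>t. f (z + t *\<^sub>R axis i 1)) 0"

definition grad :: "(real^'k \<Rightarrow> real) \<Rightarrow> real^'k \<Rightarrow> real^'k" where
  "grad f z = (\<chi> i. partial f i z)"

fun iter_partial :: "'k list \<Rightarrow> (real^'k \<Rightarrow> real) \<Rightarrow> real^'k \<Rightarrow> real" where
  "iter_partial [] f = f"
| "iter_partial (i # is) f = partial (iter_partial is f) i"

definition smooth_fun :: "(real^'k \<Rightarrow> real) \<Rightarrow> bool" where
  "smooth_fun f \<longleftrightarrow> (\<forall>is. iter_partial is f differentiable_on UNIV)"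

definition sym_pos_def_matrix :: "real^'m^'m \<Rightarrow> bool" where
  "sym_pos_def_matrix A \<longleftrightarrow> transpose A = A \<and> (\<forall>x. x \<noteq> 0 \<longrightarrow> x \<bullet> (A *v x) > 0)"

text \<open>Extended state space: coordinates \<open>Inl i\<close> = q_i, \<open>Inr (Inl i)\<close> = p_i,
  \<open>Inr (Inr k)\<close> = chi_k with k ranging over an index set of size n*m.\<close>
type_synonym ('m,'n) state = "real^('m + ('m + ('m \<times> 'n)))"

definition qof :: "('m::finite,'n::finite) state \<Rightarrow> real^'m" where
  "qof z = (\<chi> i. z $ Inl i)"
definition pof :: "('m::finite,'n::finite) state \<Rightarrow> real^'m" where
  "pof z = (\<chi> i. z $ Inr (Inl i))"
definition chiof :: "('m::finite,'n::finite) state \<Rightarrow> real^('m \<times> 'n)" where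
  "chiof z = (\<chi> k. z $ Inr (Inr k))"

definition Fhat :: "real \<Rightarrow> (real^'m \<Rightarrow> real) \<Rightarrow> (real^'m \<Rightarrow> real^'m^'m)
    \<Rightarrow> ('m::finite,'n::finite) state \<Rightarrow> real" where
  "Fhat \<beta> U M z = U (qof z) + 1/2 * (pof z \<bullet> (matrix_inv (M (qof z)) *v pof z))
     + 1/2 * (1/\<beta>) * ln (det (M (qof z))) + 1/2 * (chiof z \<bullet> chiof z)"

definition Jhat :: "real^('m::finite \<times> 'n::finite)^'m \<Rightarrow> real^('m \<times> 'n)^('m \<times> 'n)
    \<Rightarrow> real^('m + ('m + ('m \<times> 'n)))^('m + ('m + ('m \<times> 'n)))" where
  "Jhat H G = (\<chi> a b. (case (a, b) of
       (Inl i, Inr (Inl j)) \<Rightarrow> (if i = j then 1 else 0)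
     | (Inr (Inl i), Inl j) \<Rightarrow> (if i = j then -1 else 0)
     | (Inr (Inl i), Inr (Inr k)) \<Rightarrow> - (H $ i $ k)
     | (Inr (Inr k), Inr (Inl i)) \<Rightarrow> H $ i $ k
     | (Inr (Inr k), Inr (Inr l)) \<Rightarrow> G $ k $ l
     | _ \<Rightarrow> 0))"

definition Sigmahat :: "real^('m::finite \<times> 'n::finite)^('m \<times> 'n)
    \<Rightarrow> real^('m \<times> 'n)^('m + ('m + ('m \<times> 'n)))" where
  "Sigmahat D = (\<chi> a l. (case a of Inr (Inr k) \<Rightarrow> D $ k $ l | _ \<Rightarrow> 0))"

definition fokker_planck_rhs ::
  "(real^'k::finite \<Rightarrow> real^'k^'k) \<Rightarrow> (real^'k \<Rightarrow> real^'w^'k)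
     \<Rightarrow> (real^'k \<Rightarrow> real) \<Rightarrow> (real^'k \<Rightarrow> real) \<Rightarrow> real^'k \<Rightarrow> real" where
  "fokker_planck_rhs J S F \<rho> z =
     (\<Sum>i\<in>UNIV. partial (\<lambda>y. - ((J y *v grad F y) $ i) * \<rho> y
        + 1/2 * (\<Sum>j\<in>UNIV. partial (\<lambda>x. ((S x ** transpose (S x)) $ i $ j) * \<rho> x) j y)) i z)"

end

theory Submission
  imports Defs
begin

text \<open>Up to normalisation, \<open>\<rho>\<^sub>0 = exp (- \<beta> F)\<close>: the \<open>ln det\<close> term of \<open>F\<close> produces
  the factor \<open>1 / sqrt (det M)\<close>. Hence \<open>\<partial>\<^sub>c \<rho>\<^sub>0 = - \<beta> (\<partial>\<^sub>c F) \<rho>\<^sub>0\<close> in every coordinate \<open>c\<close>.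
  The probability current has components \<open>- (\<partial>\<^sub>p F) \<rho>\<^sub>0\<close> and \<open>(\<partial>\<^sub>q F + H \<chi>) \<rho>\<^sub>0\<close> in the
  \<open>q\<close>- and \<open>p\<close>-rows; in their divergence the mixed derivative \<open>\<partial>\<^sub>q \<partial>\<^sub>p F\<close> occurs with
  opposite signs and the terms from \<open>\<partial> \<rho>\<^sub>0\<close> cancel up to \<open>- \<beta> \<rho>\<^sub>0 \<partial>\<^sub>p F \<bullet> H \<chi>\<close>.
  In the \<open>\<chi>\<close>-rows the fluctuation-dissipation relation makes the diffusive current cancel
  the symmetric part of \<open>\<Gamma>\<close>; the remaining current \<open>- (H\<^sup>T \<partial>\<^sub>p F + \<Gamma>\<^sub>a \<chi>) \<rho>\<^sub>0\<close> with
  \<open>\<Gamma>\<^sub>a\<close> antisymmetric has divergence \<open>\<beta> \<rho>\<^sub>0 \<chi> \<bullet> H\<^sup>T \<partial>\<^sub>p F\<close>, which cancels the first.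
  The mixed derivative is computed explicitly, so only first derivatives of \<open>U\<close> and \<open>M\<close>
  are needed.\<close>

lemma partial_eqI:
  "((\<lambda>t. f (z + t *\<^sub>R axis i 1)) has_real_derivative d) (at 0) \<Longrightarrow> partial f i z = d"
  by (simp add: partial_def DERIV_imp_deriv)

lemma partial_const [simp]: "partial (\<lambda>x. c) i z = 0"
  by (simp add: partial_def)

lemma has_real_derivative_partial:
  fixes g :: "real^'k \<Rightarrow> real"
  assumes "g differentiable (at z)"
  shows "((\<lambda>t. g (z + t *\<^sub>R axis i 1)) has_real_derivative partial g i z) (at 0)"
proof -
  have "g differentiable (at ((\<lambda>t. z + t *\<^sub>R axis i 1) 0))"
    using assms by simp
  then have "(\<lambda>t. g (z + t *\<^sub>R axis i 1)) differentiable (at 0)"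
    by (rule differentiable_compose) (intro derivative_intros)
  then show ?thesis
    unfolding partial_def using DERIV_deriv_iff_real_differentiable by blast
qed

lemma smooth_fun_imp_differentiable: "smooth_fun f \<Longrightarrow> f differentiable (at z)"
  unfolding smooth_fun_def
  by (metis iter_partial.simps(1) differentiable_on_def UNIV_I at_within_open open_UNIV)

lemma differentiable_prod:
  fixes f :: "'i \<Rightarrow> 'a::real_normed_vector \<Rightarrow> real"
  assumes "finite S" "\<And>i. i \<in> S \<Longrightarrow> f i differentiable (at x)"
  shows "(\<lambda>x. \<Prod>i\<in>S. f i x) differentiable (at x)"
  using assms by (induction S rule: finite_induct) auto

lemma differentiable_det:
  fixes A :: "'a::real_normed_vector \<Rightarrow> real^'n^'n"
  assumes "\<And>i j. (\<lambda>x. A x $ i $ j) differentiable (at x)"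
  shows "(\<lambda>x. det (A x)) differentiable (at x)"
  unfolding det_def
  by (intro differentiable_sum ballI differentiable_mult differentiable_const
      differentiable_prod assms) auto

lemma pos_def_imp_det_nonzero:
  fixes A :: "real^'m^'m"
  assumes "\<And>x. x \<noteq> 0 \<Longrightarrow> x \<bullet> (A *v x) > 0"
  shows "det A \<noteq> 0"
proof -
  have "\<forall>x. A *v x = 0 \<longrightarrow> x = 0"
    using assms by (metis inner_zero_right less_irrefl)
  then obtain B where "B ** A = mat 1"
    using matrix_left_invertible_ker by blast
  then have "invertible A"
    unfolding invertible_def using matrix_left_right_inverse by blast
  then show ?thesis
    using invertible_det_nz by blast
qed

text \<open>The determinant cannot vanish along the segment from the identity to \<open>A\<close>,
  since all matrices on it are positive definite.\<close>
lemma pos_def_imp_det_pos: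
  fixes A :: "real^'m^'m"
  assumes pd: "\<And>x. x \<noteq> 0 \<Longrightarrow> x \<bullet> (A *v x) > 0"
  shows "det A > 0"
proof (rule ccontr)
  define g where "g t = det ((1 - t) *\<^sub>R mat 1 + t *\<^sub>R A)" for t :: real
  assume "\<not> det A > 0"
  moreover have "isCont g t" for t
    unfolding g_def
    by (intro differentiable_imp_continuous_within differentiable_det) (simp add: mat_def)
  ultimately obtain t where t: "0 \<le> t" "t \<le> 1" "g t = 0"
    using IVT2[of g 1 0 0] by (auto simp: g_def)
  have "x \<bullet> (((1 - t) *\<^sub>R mat 1 + t *\<^sub>R A) *v x) > 0" if "x \<noteq> 0" for x
  proof -
    have "x \<bullet> (((1 - t) *\<^sub>R mat 1 + t *\<^sub>R A) *v x) = (1 - t) * (x \<bullet> x) + t * (x \<bullet> (A *v x))"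
      by (simp add: matrix_vector_mult_add_rdistrib scaleR_matrix_vector_assoc[symmetric]
          inner_add_right)
    moreover have "x \<bullet> x > 0" "x \<bullet> (A *v x) > 0"
      using that pd by auto
    ultimately show ?thesis
      using t by (cases "t = 0") (auto intro: add_nonneg_pos)
  qed
  then have "g t \<noteq> 0"
    unfolding g_def by (rule pos_def_imp_det_nonzero)
  with t show False by simp
qed

lemma matrix_inv_cramer:
  fixes A :: "real^'m^'m"
  assumes "det A \<noteq> 0"
  shows "matrix_inv A $ a $ b = det (\<chi> i j. if j = a then axis b 1 $ i else A $ i $ j) / det A"
proof -
  have "invertible A"
    using assms invertible_det_nz by blast
  then have "A ** matrix_inv A = mat 1"
    unfolding invertible_def matrix_inv_def by (rule someI2_ex) blast
  then have "A *v (matrix_inv A *v axis b 1) = axis b 1"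
    by (simp add: matrix_vector_mul_assoc)
  then have "(matrix_inv A *v axis b 1) $ a = det (\<chi> i j. if j = a then axis b 1 $ i else A $ i $ j) / det A"
    using cramer[OF assms] by simp
  then show ?thesis
    by (simp add: matrix_vector_mult_basis column_def)
qed

lemma differentiable_matrix_inv:
  fixes A :: "real^'k \<Rightarrow> real^'m^'m"
  assumes "\<And>y. det (A y) \<noteq> 0" and "\<And>i j. (\<lambda>y. A y $ i $ j) differentiable (at x)"
  shows "(\<lambda>y. matrix_inv (A y) $ a $ b) differentiable (at x)"
proof -
  have "(\<lambda>y. if j = a then axis b 1 $ i else A y $ i $ j) differentiable (at x)" for i j
    by (cases "j = a") (auto simp: assms(2))
  then show ?thesis
    unfolding matrix_inv_cramer[OF assms(1)]
    by (intro differentiable_divide differentiable_det) (auto simp: assms)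
qed

lemma inner_matrix_vector_as_sum:
  "(p :: real^'a) \<bullet> (A *v p) = (\<Sum>a\<in>UNIV. \<Sum>b\<in>UNIV. p $ a * A $ a $ b * p $ b)"
  by (simp add: inner_vec_def matrix_vector_mult_def sum_distrib_left mult.assoc)

lemma has_real_derivative_quadratic_form:
  fixes A :: "real \<Rightarrow> real^'a^'a"
  assumes "\<And>a b. ((\<lambda>t. A t $ a $ b) has_real_derivative A' $ a $ b) (at 0)"
  shows "((\<lambda>t. p \<bullet> (A t *v p)) has_real_derivative p \<bullet> (A' *v p)) (at 0)"
  unfolding inner_matrix_vector_as_sum
  by (intro DERIV_sum DERIV_cmult DERIV_cmult_right assms)

lemma has_real_derivative_matrix_vector:
  fixes A :: "real \<Rightarrow> real^'a^'a"
  assumes "\<And>a b. ((\<lambda>t. A t $ a $ b) has_real_derivative A' $ a $ b) (at 0)"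
  shows "((\<lambda>t. (A t *v p) $ i) has_real_derivative (A' *v p) $ i) (at 0)"
    and "((\<lambda>t. (p v* A t) $ i) has_real_derivative (p v* A') $ i) (at 0)"
  unfolding matrix_vector_mult_def vector_matrix_mult_def
  by (auto intro!: DERIV_sum DERIV_cmult DERIV_cmult_right assms)

lemma matrix_vector_add_axis:
  "(A *v (x + t *\<^sub>R axis k 1)) $ i = (A *v x) $ i + t * A $ i $ k"
  "((x + t *\<^sub>R axis k 1) v* A) $ i = (x v* A) $ i + t * A $ k $ i"
  for A :: "real^'a^'a"
  by (simp_all add: matrix_vector_mult_def vector_matrix_mult_def algebra_simps sum.distrib
      sum_distrib_left[symmetric] axis_def if_distrib[of "\<lambda>x. _ * x"] cong: if_cong)

lemma has_real_derivative_quadratic_form_axis: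
  fixes A :: "real^'a^'a"
  shows "((\<lambda>t. (p + t *\<^sub>R axis i 1) \<bullet> (A *v (p + t *\<^sub>R axis i 1))) has_real_derivative
     (A *v p) $ i + (p v* A) $ i) (at 0)"
proof -
  have "p \<bullet> (A *v axis i 1) = (p v* A) $ i"
    by (simp add: dot_lmul_matrix[symmetric] inner_axis)
  then have "(p + t *\<^sub>R axis i 1) \<bullet> (A *v (p + t *\<^sub>R axis i 1))
      = p \<bullet> (A *v p) + t * ((A *v p) $ i + (p v* A) $ i) + t^2 * A $ i $ i" for t
    by (simp add: inner_add_left matrix_vector_right_distrib matrix_vector_mult_scaleR
        matrix_vector_mult_basis column_def inner_axis' power2_eq_square algebra_simps)
  then show ?thesis
    by (auto intro!: derivative_eq_intros)
qed

lemma has_real_derivative_inner_self_axis: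
  fixes x :: "real^'a"
  shows "((\<lambda>t. (x + t *\<^sub>R axis k 1) \<bullet> (x + t *\<^sub>R axis k 1)) has_real_derivative 2 * x $ k) (at 0)"
proof -
  have "(x + t *\<^sub>R axis k 1) \<bullet> (x + t *\<^sub>R axis k 1) = x \<bullet> x + 2 * t * x $ k + t^2" for t
    by (auto simp: inner_add_left inner_add_right inner_axis inner_axis' power2_eq_square inner_commute)
  then show ?thesis
    by (auto intro!: derivative_eq_intros)
qed

lemma sum_UNIV_Plus:
  "sum f (UNIV :: ('a::finite + 'b::finite) set) = (\<Sum>a\<in>UNIV. f (Inl a)) + (\<Sum>b\<in>UNIV. f (Inr b))"
  by (subst UNIV_Plus_UNIV[symmetric], subst sum.Plus) (auto simp: o_def)

lemma qof_add_axis [simp]: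
  "qof (z + t *\<^sub>R axis (Inl i) 1) = qof z + t *\<^sub>R axis i 1"
  "qof (z + t *\<^sub>R axis (Inr j) 1) = qof z"
  by (auto simp: qof_def vec_eq_iff axis_def)

lemma pof_add_axis [simp]:
  "pof (z + t *\<^sub>R axis (Inr (Inl i)) 1) = pof z + t *\<^sub>R axis i 1"
  "pof (z + t *\<^sub>R axis (Inl j) 1) = pof z"
  "pof (z + t *\<^sub>R axis (Inr (Inr k)) 1) = pof z"
  by (auto simp: pof_def vec_eq_iff axis_def)

lemma chiof_add_axis [simp]:
  "chiof (z + t *\<^sub>R axis (Inr (Inr k)) 1) = chiof z + t *\<^sub>R axis k 1"
  "chiof (z + t *\<^sub>R axis (Inl j) 1) = chiof z"
  "chiof (z + t *\<^sub>R axis (Inr (Inl i)) 1) = chiof z"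
  by (auto simp: chiof_def vec_eq_iff axis_def)

lemma Jhat_mult_vector:
  fixes g :: "('m::finite, 'n::finite) state"
  shows "(Jhat H G *v g) $ Inl i = pof g $ i"
    and "(Jhat H G *v g) $ Inr (Inl i) = - qof g $ i - (H *v chiof g) $ i"
    and "(Jhat H G *v g) $ Inr (Inr k) = (pof g v* H) $ k + (G *v chiof g) $ k"
  by (simp_all add: matrix_vector_mult_def vector_matrix_mult_def Jhat_def sum_UNIV_Plus qof_def
      pof_def chiof_def if_distrib[of "\<lambda>x. x * _"] sum_negf cong: if_cong)
    (simp add: mult.commute)

lemma Sigmahat_mult_transpose:
  "(Sigmahat D ** transpose (Sigmahat D)) $ Inr (Inr k) $ Inr (Inr l) = (D ** transpose D) $ k $ l"
  "(Sigmahat D ** transpose (Sigmahat D)) $ Inl i $ b = 0"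
  "(Sigmahat D ** transpose (Sigmahat D)) $ Inr (Inl i) $ b = 0"
  "(Sigmahat D ** transpose (Sigmahat D)) $ a $ Inl i = 0"
  "(Sigmahat D ** transpose (Sigmahat D)) $ a $ Inr (Inl i) = 0"
  by (simp_all add: matrix_matrix_mult_def Sigmahat_def transpose_def)

locale reduced_model =
  fixes \<beta> :: real
    and U :: "real^'m::finite \<Rightarrow> real"
    and M :: "real^'m \<Rightarrow> real^'m^'m"
    and H :: "real^'m \<Rightarrow> real^('m \<times> 'n::finite)^'m"
    and \<Gamma> :: "real^'m \<Rightarrow> real^('m \<times> 'n)^('m \<times> 'n)"
    and D :: "real^'m \<Rightarrow> real^('m \<times> 'n)^('m \<times> 'n)"
  assumes beta_pos: "\<beta> > 0"
    and U_differentiable: "\<And>q. U differentiable (at q)"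
    and M_differentiable: "\<And>i j q. (\<lambda>q. M q $ i $ j) differentiable (at q)"
    and M_pos_def: "\<And>q x. x \<noteq> 0 \<Longrightarrow> x \<bullet> (M q *v x) > 0"
    and fluct_diss: "\<And>q. D q ** transpose (D q) = - (1/\<beta>) *\<^sub>R (\<Gamma> q + transpose (\<Gamma> q))"
begin

abbreviation F :: "('m, 'n) state \<Rightarrow> real" where
  "F \<equiv> Fhat \<beta> U M"

definition G :: "real^'m \<Rightarrow> real^'m^'m" where
  "G q = matrix_inv (M q)"

definition dG :: "'m \<Rightarrow> real^'m \<Rightarrow> real^'m^'m" where
  "dG i q = (\<chi> a b. partial (\<lambda>q. G q $ a $ b) i q)"

definition dF_dq :: "'m \<Rightarrow> ('m, 'n) state \<Rightarrow> real" where
  "dF_dq i y = partial U i (qof y) + 1/2 * (pof y \<bullet> (dG i (qof y) *v pof y))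
     + 1/2 * (1/\<beta>) * partial (\<lambda>q. ln (det (M q))) i (qof y)"

text \<open>This is \<open>G q *v p\<close>, as \<open>G q\<close> is symmetric; the symmetrised form is what differentiating
  the quadratic form yields, and it spares proving symmetry of the inverse.\<close>
definition velocity :: "('m, 'n) state \<Rightarrow> real^'m" where
  "velocity y = (1/2) *\<^sub>R (G (qof y) *v pof y + pof y v* G (qof y))"

definition d2F_dq_dp :: "'m \<Rightarrow> ('m, 'n) state \<Rightarrow> real" where
  "d2F_dq_dp i y = 1/2 * ((dG i (qof y) *v pof y) $ i + (pof y v* dG i (qof y)) $ i)"

definition rho :: "('m, 'n) state \<Rightarrow> real" where
  "rho = (\<lambda>y. 1 / ((2 * pi) powr (real CARD('m) / 2) * sqrt (det (M (qof y))))
          * exp (- \<beta> * (U (qof y) + 1/2 * (pof y \<bullet> (matrix_inv (M (qof y)) *v pof y))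
                          + 1/2 * (chiof y \<bullet> chiof y))))"

definition flux :: "('m + ('m + ('m \<times> 'n))) \<Rightarrow> ('m, 'n) state \<Rightarrow> real" where
  "flux a y = - ((Jhat (H (qof y)) (\<Gamma> (qof y)) *v grad F y) $ a) * rho y
     + 1/2 * (\<Sum>j\<in>UNIV. partial (\<lambda>x. ((Sigmahat (D (qof x)) ** transpose (Sigmahat (D (qof x))))
        $ a $ j) * rho x) j y)"

lemma det_M_pos: "det (M q) > 0"
  using M_pos_def by (rule pos_def_imp_det_pos)

lemma has_real_derivative_G:
  "((\<lambda>t. G (q + t *\<^sub>R axis i 1) $ a $ b) has_real_derivative dG i q $ a $ b) (at 0)"
proof -
  have "(\<lambda>q. G q $ a $ b) differentiable (at q)"
    unfolding G_def using det_M_pos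
    by (intro differentiable_matrix_inv M_differentiable) (metis less_irrefl)
  then show ?thesis
    unfolding dG_def vec_lambda_beta by (rule has_real_derivative_partial)
qed

lemma ln_det_M_differentiable: "(\<lambda>q. ln (det (M q))) differentiable (at q)"
proof -
  have "ln differentiable (at (det (M q)))"
    using DERIV_ln[OF det_M_pos] real_differentiable_def by blast
  then show ?thesis
    by (rule differentiable_compose) (intro differentiable_det M_differentiable)
qed

lemma has_real_derivative_F_q:
  "((\<lambda>t. F (y + t *\<^sub>R axis (Inl i) 1)) has_real_derivative dF_dq i y) (at 0)"
proof -
  let ?q = "\<lambda>t. qof y + t *\<^sub>R axis i 1"
  have "((\<lambda>t. U (?q t) + 1/2 * (pof y \<bullet> (G (?q t) *v pof y))
      + 1/2 * (1/\<beta>) * ln (det (M (?q t))) + 1/2 * (chiof y \<bullet> chiof y))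
      has_real_derivative dF_dq i y + 0) (at 0)"
    unfolding dF_dq_def
    by (intro DERIV_add DERIV_cmult DERIV_const has_real_derivative_partial U_differentiable
        ln_det_M_differentiable has_real_derivative_quadratic_form has_real_derivative_G)
  then show ?thesis
    by (simp add: Fhat_def G_def)
qed

lemma has_real_derivative_F_p:
  "((\<lambda>t. F (y + t *\<^sub>R axis (Inr (Inl i)) 1)) has_real_derivative velocity y $ i) (at 0)"
  unfolding Fhat_def velocity_def G_def[symmetric]
  by (auto intro!: derivative_eq_intros has_real_derivative_quadratic_form_axis)

lemma has_real_derivative_F_chi:
  "((\<lambda>t. F (y + t *\<^sub>R axis (Inr (Inr k)) 1)) has_real_derivative chiof y $ k) (at 0)"
  unfolding Fhat_def
  by (auto intro!: derivative_eq_intros has_real_derivative_inner_self_axis)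

lemma grad_F:
  "qof (grad F y) = (\<chi> i. dF_dq i y)"
  "pof (grad F y) = velocity y"
  "chiof (grad F y) = chiof y"
  using partial_eqI[OF has_real_derivative_F_q] partial_eqI[OF has_real_derivative_F_p]
    partial_eqI[OF has_real_derivative_F_chi]
  by (simp_all add: grad_def qof_def pof_def chiof_def vec_eq_iff)

lemma rho_eq_exp: "rho y = exp (- \<beta> * F y) / (2 * pi) powr (real CARD('m) / 2)"
proof -
  define d where "d = det (M (qof y))"
  define E where "E = U (qof y) + 1/2 * (pof y \<bullet> (matrix_inv (M (qof y)) *v pof y))
    + 1/2 * (chiof y \<bullet> chiof y)"
  have "d > 0"
    unfolding d_def by (rule det_M_pos)
  then have "sqrt d = exp (ln d / 2)"
    by (simp add: powr_half_sqrt[symmetric] powr_def)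
  moreover have "- \<beta> * F y = - \<beta> * E - ln d / 2"
    using beta_pos unfolding Fhat_def E_def d_def by (simp add: field_simps)
  ultimately have "exp (- \<beta> * F y) = exp (- \<beta> * E) / sqrt d"
    by (simp add: exp_diff)
  then show ?thesis
    unfolding rho_def E_def[symmetric] d_def[symmetric] by simp
qed

lemma has_real_derivative_rho:
  assumes "((\<lambda>t. F (y + t *\<^sub>R axis c 1)) has_real_derivative d) (at 0)"
  shows "((\<lambda>t. rho (y + t *\<^sub>R axis c 1)) has_real_derivative - \<beta> * d * rho y) (at 0)"
  unfolding rho_eq_exp
  by (auto intro!: derivative_eq_intros assms)

lemma has_real_derivative_velocity_q:
  "((\<lambda>t. velocity (y + t *\<^sub>R axis (Inl i) 1) $ i) has_real_derivative d2F_dq_dp i y) (at 0)"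
  unfolding velocity_def d2F_dq_dp_def
  by (auto intro!: derivative_eq_intros has_real_derivative_matrix_vector has_real_derivative_G)

lemma has_real_derivative_dF_dq_p:
  "((\<lambda>t. dF_dq i (y + t *\<^sub>R axis (Inr (Inl i)) 1)) has_real_derivative d2F_dq_dp i y) (at 0)"
  unfolding dF_dq_def d2F_dq_dp_def
  by (auto intro!: derivative_eq_intros has_real_derivative_quadratic_form_axis)

lemma velocity_add_axis_chi [simp]:
  "velocity (y + t *\<^sub>R axis (Inr (Inr k)) 1) = velocity y"
  by (simp add: velocity_def)

lemma flux_q: "flux (Inl i) y = - velocity y $ i * rho y"
  by (simp add: flux_def Jhat_mult_vector grad_F Sigmahat_mult_transpose)

lemma flux_p: "flux (Inr (Inl i)) y = (dF_dq i y + (H (qof y) *v chiof y) $ i) * rho y"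
  by (simp add: flux_def Jhat_mult_vector grad_F Sigmahat_mult_transpose algebra_simps)

lemma diffusive_flux_chi:
  "(\<Sum>j\<in>UNIV. partial (\<lambda>x. ((Sigmahat (D (qof x)) ** transpose (Sigmahat (D (qof x)))) $ Inr (Inr k) $ j)
      * rho x) j y) = ((\<Gamma> (qof y) *v chiof y) $ k + (chiof y v* \<Gamma> (qof y)) $ k) * rho y"
proof -
  have "partial (\<lambda>x. (D (qof x) ** transpose (D (qof x))) $ k $ l * rho x) (Inr (Inr l)) y
      = (D (qof y) ** transpose (D (qof y))) $ k $ l * (- \<beta> * chiof y $ l * rho y)" for l
    by (rule partial_eqI) (auto intro!: derivative_eq_intros has_real_derivative_rho
        has_real_derivative_F_chi)
  then have "(\<Sum>j\<in>UNIV. partial (\<lambda>x. ((Sigmahat (D (qof x)) ** transpose (Sigmahat (D (qof x))))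
      $ Inr (Inr k) $ j) * rho x) j y)
      = (\<Sum>l\<in>UNIV. (D (qof y) ** transpose (D (qof y))) $ k $ l * (- \<beta> * chiof y $ l * rho y))"
    by (simp add: sum_UNIV_Plus Sigmahat_mult_transpose)
  also have "\<dots> = (\<Sum>l\<in>UNIV. (\<Gamma> (qof y) $ k $ l + \<Gamma> (qof y) $ l $ k) * chiof y $ l) * rho y"
    using beta_pos unfolding fluct_diss sum_distrib_right
    by (intro sum.cong) (simp_all add: transpose_def field_simps)
  also have "\<dots> = ((\<Gamma> (qof y) *v chiof y) $ k + (chiof y v* \<Gamma> (qof y)) $ k) * rho y"
    by (simp add: matrix_vector_mult_def vector_matrix_mult_def sum.distrib algebra_simps)
  finally show ?thesis .
qed

lemma flux_chi:
  "flux (Inr (Inr k)) y = - ((velocity y v* H (qof y)) $ k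
      + ((\<Gamma> (qof y) *v chiof y) $ k - (chiof y v* \<Gamma> (qof y)) $ k) / 2) * rho y"
  unfolding flux_def diffusive_flux_chi by (simp add: Jhat_mult_vector grad_F field_simps)

lemma partial_flux_q:
  "partial (flux (Inl i)) (Inl i) y
     = - d2F_dq_dp i y * rho y + \<beta> * velocity y $ i * dF_dq i y * rho y"
  unfolding flux_q
  by (rule partial_eqI) (auto intro!: derivative_eq_intros has_real_derivative_velocity_q
      has_real_derivative_rho has_real_derivative_F_q)

lemma partial_flux_p:
  "partial (flux (Inr (Inl i))) (Inr (Inl i)) y
     = d2F_dq_dp i y * rho y - \<beta> * (dF_dq i y + (H (qof y) *v chiof y) $ i) * velocity y $ i * rho y"
  unfolding flux_p
  by (rule partial_eqI) (auto intro!: derivative_eq_intros has_real_derivative_dF_dq_p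
      has_real_derivative_rho has_real_derivative_F_p)

lemma partial_flux_chi:
  "partial (flux (Inr (Inr k))) (Inr (Inr k)) y = \<beta> * chiof y $ k * ((velocity y v* H (qof y)) $ k
      + ((\<Gamma> (qof y) *v chiof y) $ k - (chiof y v* \<Gamma> (qof y)) $ k) / 2) * rho y"
proof (rule partial_eqI)
  let ?c = "(velocity y v* H (qof y)) $ k
      + ((\<Gamma> (qof y) *v chiof y) $ k - (chiof y v* \<Gamma> (qof y)) $ k) / 2"
  have flux_line: "(\<lambda>t. flux (Inr (Inr k)) (y + t *\<^sub>R axis (Inr (Inr k)) 1))
      = (\<lambda>t. - ?c * rho (y + t *\<^sub>R axis (Inr (Inr k)) 1))"
    by (simp add: flux_chi matrix_vector_add_axis)
  have rho_line: "((\<lambda>t. - ?c * rho (y + t *\<^sub>R axis (Inr (Inr k)) 1)) has_real_derivative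
      - ?c * (- \<beta> * chiof y $ k * rho y)) (at 0)"
    by (intro DERIV_cmult has_real_derivative_rho has_real_derivative_F_chi)
  show "((\<lambda>t. flux (Inr (Inr k)) (y + t *\<^sub>R axis (Inr (Inr k)) 1)) has_real_derivative
      \<beta> * chiof y $ k * ?c * rho y) (at 0)"
    unfolding flux_line by (rule DERIV_cong[OF rho_line]) (simp add: field_simps)
qed

lemma divergence_flux_qp:
  "(\<Sum>i\<in>UNIV. partial (flux (Inl i)) (Inl i) z + partial (flux (Inr (Inl i))) (Inr (Inl i)) z)
     = - \<beta> * rho z * (velocity z \<bullet> (H (qof z) *v chiof z))"
  by (simp add: partial_flux_q partial_flux_p inner_vec_def sum_distrib_left algebra_simps)

lemma divergence_flux_chi:
  "(\<Sum>k\<in>UNIV. partial (flux (Inr (Inr k))) (Inr (Inr k)) z)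
     = \<beta> * rho z * (chiof z \<bullet> (velocity z v* H (qof z))
        + (chiof z \<bullet> (\<Gamma> (qof z) *v chiof z) - chiof z \<bullet> (chiof z v* \<Gamma> (qof z))) / 2)"
  by (simp add: partial_flux_chi inner_vec_def sum_distrib_left sum.distrib sum_subtractf
      sum_divide_distrib[symmetric] field_simps)

lemma fokker_planck_rhs_rho:
  "fokker_planck_rhs (\<lambda>y. Jhat (H (qof y)) (\<Gamma> (qof y))) (\<lambda>y. Sigmahat (D (qof y))) F rho z = 0"
proof -
  have "fokker_planck_rhs (\<lambda>y. Jhat (H (qof y)) (\<Gamma> (qof y))) (\<lambda>y. Sigmahat (D (qof y))) F rho z
      = (\<Sum>a\<in>UNIV. partial (flux a) a z)"
    unfolding fokker_planck_rhs_def flux_def[abs_def] by (rule refl)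
  also have "\<dots> = (\<Sum>i\<in>UNIV. partial (flux (Inl i)) (Inl i) z + partial (flux (Inr (Inl i))) (Inr (Inl i)) z)
      + (\<Sum>k\<in>UNIV. partial (flux (Inr (Inr k))) (Inr (Inr k)) z)"
    by (simp add: sum_UNIV_Plus sum.distrib)
  also have "\<dots> = 0"
    unfolding divergence_flux_qp divergence_flux_chi
    by (simp add: inner_commute[of "chiof z"] dot_lmul_matrix)
  finally show ?thesis .
qed

end

theorem proposition2:
  fixes \<beta> :: real
    and U :: "real^'m::finite \<Rightarrow> real"
    and M :: "real^'m \<Rightarrow> real^'m^'m"
    and H :: "real^'m \<Rightarrow> real^('m \<times> 'n::finite)^'m"
    and \<Gamma> :: "real^'m \<Rightarrow> real^('m \<times> 'n)^('m \<times> 'n)"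
    and D :: "real^'m \<Rightarrow> real^('m \<times> 'n)^('m \<times> 'n)"
  assumes beta_pos: "\<beta> > 0"
    and U_smooth: "smooth_fun U"
    and M_smooth: "\<And>i j. smooth_fun (\<lambda>q. M q $ i $ j)"
    and H_smooth: "\<And>i k. smooth_fun (\<lambda>q. H q $ i $ k)"
    and Gamma_smooth: "\<And>k l. smooth_fun (\<lambda>q. \<Gamma> q $ k $ l)"
    and D_smooth: "\<And>k l. smooth_fun (\<lambda>q. D q $ k $ l)"
    and M_spd: "\<And>q. sym_pos_def_matrix (M q)"
    and normalizable: "(\<lambda>q. exp (- \<beta> * U q)) integrable_on UNIV"
    and fluct_diss: "\<And>q. D q ** transpose (D q) = - (1/\<beta>) *\<^sub>R (\<Gamma> q + transpose (\<Gamma> q))"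
  shows "\<forall>z :: ('m,'n) state.
     fokker_planck_rhs
       (\<lambda>y. Jhat (H (qof y)) (\<Gamma> (qof y)))
       (\<lambda>y. Sigmahat (D (qof y)))
       (Fhat \<beta> U M)
       (\<lambda>y. 1 / ((2 * pi) powr (real CARD('m) / 2) * sqrt (det (M (qof y))))
          * exp (- \<beta> * (U (qof y) + 1/2 * (pof y \<bullet> (matrix_inv (M (qof y)) *v pof y))
                          + 1/2 * (chiof y \<bullet> chiof y))))
       z = 0"
proof -
  interpret reduced_model \<beta> U M H \<Gamma> D
  proof
    show "x \<bullet> (M q *v x) > 0" if "x \<noteq> 0" for q x
      using M_spd that unfolding sym_pos_def_matrix_def by blast
  qed (auto simp: beta_pos U_smooth M_smooth fluct_diss smooth_fun_imp_differentiable)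
  show ?thesis
    using fokker_planck_rhs_rho unfolding rho_def by blast
qed

end
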